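(* Let $n\ge 2$, $c\ge 2$, $d$ prime, and $f:\mathbb{Z}_c^n\to\mathbb{Z}_d$. The distribution $$p(\mathbf{m}|\mathbf{s})=\begin{cases} d^{1-n} & \text{if } \sum_{j=1}^n m_j\equiv f(\mathbf{s}) \pmod d,\\ 0&\text{otherwise},\end{cases}$$ is a vertex (extreme point) of the non-signaling polytope $\mathcal{NS}$ if and only if $f$ is not bi-partite linear.
   Context: $\mathcal{NS}$ is the convex polytope of conditional distributions $p(\mathbf{m}|\mathbf{s})$, $\mathbf{m}\in\mathbb{Z}_d^n$, $\mathbf{s}\in\mathbb{Z}_c^n$, that are non-signaling: for every subset $S$ of parties, the marginal of $(m_j)_{j\in S}$ depends only on $(s_j)_{j\in S}$. A bipartition $\{A,B\}$ of $\{1,\dots,n\}$ is a division into two disjoint non-empty sets whose union is $\{1,\dots,n\}$. The function $f$ is bi-partite linear if there exist a bipartition $\{A,B\}$ and functions $f^A$ of $\mathbf{s}^A=(s_j)_{j\in A}$ and $f^B$ of $\mathbf{s}^B=(s_j)_{j\in B}$, valued in $\mathbb{Z}_d$, with $f(\mathbf{s})=f^A(\mathbf{s}^A)+f^B(\mathbf{s}^B)$ (mod $d$) for all $\mathbf{s}$. *)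

theory Defs
  imports Complex_Main "HOL-Computational_Algebra.Primes"
begin

(* Strings of length n over the alphabet Z_k = {0..<k}; party j (0 <= j < n) holds entry j. *)
definition words :: "nat \<Rightarrow> nat \<Rightarrow> nat list set" where
  "words n k = {x. length x = n \<and> (\<forall>a\<in>set x. a < k)}"

(* Conditional distributions p(m|s), with m in Z_d^n and s in Z_c^n; represented as
   real functions vanishing outside the domain. *)
definition cond_dist :: "nat \<Rightarrow> nat \<Rightarrow> nat \<Rightarrow> (nat list \<Rightarrow> nat list \<Rightarrow> real) \<Rightarrow> bool" where
  "cond_dist n c d p \<longleftrightarrow>
     (\<forall>m s. p m s \<ge> 0) \<and>
     (\<forall>m s. (m \<notin> words n d \<or> s \<notin> words n c) \<longrightarrow> p m s = 0) \<and>
     (\<forall>s\<in>words n c. (\<Sum>m\<in>words n d. p m s) = 1)"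

definition marginal :: "nat \<Rightarrow> nat \<Rightarrow> (nat list \<Rightarrow> nat list \<Rightarrow> real) \<Rightarrow> nat set
    \<Rightarrow> nat list \<Rightarrow> nat list \<Rightarrow> real" where
  "marginal n d p S m s = (\<Sum>m'\<in>{m'\<in>words n d. \<forall>j\<in>S. m' ! j = m ! j}. p m' s)"

definition non_signaling :: "nat \<Rightarrow> nat \<Rightarrow> nat \<Rightarrow> (nat list \<Rightarrow> nat list \<Rightarrow> real) \<Rightarrow> bool" where
  "non_signaling n c d p \<longleftrightarrow>
     (\<forall>S \<subseteq> {0..<n}. \<forall>s\<in>words n c. \<forall>s'\<in>words n c. \<forall>m\<in>words n d.
        (\<forall>j\<in>S. s ! j = s' ! j) \<longrightarrow> marginal n d p S m s = marginal n d p S m s')"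

definition NS :: "nat \<Rightarrow> nat \<Rightarrow> nat \<Rightarrow> (nat list \<Rightarrow> nat list \<Rightarrow> real) set" where
  "NS n c d = {p. cond_dist n c d p \<and> non_signaling n c d p}"

definition extreme_point_fun :: "('a \<Rightarrow> 'b \<Rightarrow> real) \<Rightarrow> ('a \<Rightarrow> 'b \<Rightarrow> real) set \<Rightarrow> bool" where
  "extreme_point_fun p K \<longleftrightarrow> p \<in> K \<and>
     (\<forall>q\<in>K. \<forall>r\<in>K. \<forall>t::real. 0 < t \<and> t < 1 \<and> q \<noteq> r \<longrightarrow>
        p \<noteq> (\<lambda>m s. (1 - t) * q m s + t * r m s))"

definition depends_only_on :: "nat \<Rightarrow> nat \<Rightarrow> nat set \<Rightarrow> (nat list \<Rightarrow> nat) \<Rightarrow> bool" where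
  "depends_only_on n c A g \<longleftrightarrow>
     (\<forall>s\<in>words n c. \<forall>s'\<in>words n c. (\<forall>j\<in>A. s ! j = s' ! j) \<longrightarrow> g s = g s')"

definition bipartite_linear :: "nat \<Rightarrow> nat \<Rightarrow> nat \<Rightarrow> (nat list \<Rightarrow> nat) \<Rightarrow> bool" where
  "bipartite_linear n c d f \<longleftrightarrow>
     (\<exists>A B fA fB. A \<noteq> {} \<and> B \<noteq> {} \<and> A \<inter> B = {} \<and> A \<union> B = {0..<n} \<and>
        depends_only_on n c A fA \<and> depends_only_on n c B fB \<and>
        (\<forall>s\<in>words n c. fA s < d \<and> fB s < d) \<and>
        (\<forall>s\<in>words n c. f s mod d = (fA s + fB s) mod d))"

definition pf :: "nat \<Rightarrow> nat \<Rightarrow> nat \<Rightarrow> (nat list \<Rightarrow> nat) \<Rightarrow> nat list \<Rightarrow> nat list \<Rightarrow> real" where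
  "pf n c d f m s =
     (if m \<in> words n d \<and> s \<in> words n c \<and> sum_list m mod d = f s mod d
      then 1 / real d ^ (n - 1) else 0)"

end

theory Submission
  imports Defs "HOL-Number_Theory.Cong"
begin

(*
  Two operations on outputs drive the whole proof:
  shift d j k adds k to the output of party j, and transfer d i j a moves a units
  of output from party j to party i (preserving the sum).

  (1) p lies in NS: changing the input of party j is compensated by shifting the
      output of party j by f(s') - f(s) (non_signaling_by_shifts).
  (2) If f = fA + fB across a cut {A,B}, the class of the A-outputs relative to fA
      is a second non-signaling observable; tilting p by it yields two distinct
      distributions in NS whose midpoint is p, so p is not a vertex.
  (3) Conversely, let q in NS vanish wherever p does.  Non-signaling makes q
      invariant under the output shift compensating any input change (q_shift).
      Going around a square of two input changes of parties i and j shows that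
      q(.|s) is invariant under the transfer of the mixed difference of f
      between i and j; as d is prime this yields invariance under unit transfers.
      The parties linked to party 0 by unit transfers form one side of a cut
      across which f is additive (bipartite_linear_if_additive_across); if f is
      not bi-partite linear all parties are linked, q is constant on the support
      and hence q = p, so p is a vertex (extreme_point_funI).
*)

lemma words_iff: "m \<in> words n k \<longleftrightarrow> length m = n \<and> (\<forall>i<n. m ! i < k)"
  by (auto simp: words_def in_set_conv_nth) (metis nth_mem)

lemma finite_words: "finite (words n k)"
proof -
  have "words n k = {xs. set xs \<subseteq> {..<k} \<and> length xs = n}" by (auto simp: words_def)
  then show ?thesis by (simp add: finite_lists_length_eq)
qed

lemma card_words: "card (words n k) = k ^ n"
proof -
  have "words n k = {xs. set xs \<subseteq> {..<k} \<and> length xs = n}" by (auto simp: words_def)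
  then show ?thesis by (simp add: card_lists_length_eq)
qed

lemma update_words: "s \<in> words n c \<Longrightarrow> x < c \<Longrightarrow> s[j := x] \<in> words n c"
  by (cases "j < length s") (auto simp: words_iff nth_list_update)

lemma nat_mod_eq_iff_cong: "(a mod d = b mod d) \<longleftrightarrow> [int a = int b] (mod int d)"
  by (metis cong_def cong_int_iff)

lemma cong_offset_iff:
  fixes x y x' y' a m :: int
  assumes "[x' - y' = x - y] (mod m)"
  shows "[x' = y' + a] (mod m) \<longleftrightarrow> [x = y + a] (mod m)"
proof -
  have eq: "x' - (y' + a) = (x' - y' - (x - y)) + (x - (y + a))" by simp
  show ?thesis
    unfolding cong_iff_dvd_diff eq using assms[unfolded cong_iff_dvd_diff] by (rule dvd_add_right_iff)
qed

definition shift :: "nat \<Rightarrow> nat \<Rightarrow> int \<Rightarrow> nat list \<Rightarrow> nat list" where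
  "shift d j k m = m[j := nat ((int (m ! j) + k) mod int d)]"

lemma length_shift [simp]: "length (shift d j k m) = length m"
  by (simp add: shift_def)

lemma nth_shift:
  "shift d j k m ! i = (if i = j \<and> j < length m then nat ((int (m ! j) + k) mod int d) else m ! i)"
  by (auto simp: shift_def nth_list_update list_update_beyond)

lemma shift_words: "0 < d \<Longrightarrow> m \<in> words n d \<Longrightarrow> shift d j k m \<in> words n d"
  by (auto simp: words_iff nth_shift nat_less_iff)

lemma shift_shift: "0 < d \<Longrightarrow> shift d j a (shift d j b m) = shift d j (a + b) m"
  by (cases "j < length m") (auto simp: shift_def mod_add_left_eq mod_add_right_eq ac_simps list_update_beyond)

lemma shift_comm:
  assumes "0 < d" shows "shift d i a (shift d j b m) = shift d j b (shift d i a m)"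
proof (cases "i = j")
  case True
  then show ?thesis using shift_shift[OF assms] by (simp add: add.commute)
qed (auto simp: shift_def list_update_swap nth_list_update)

lemma shift_cong: "[a = b] (mod int d) \<Longrightarrow> shift d j a m = shift d j b m"
  unfolding shift_def cong_def by (metis mod_add_right_eq)

lemma shift_trivial: "m \<in> words n d \<Longrightarrow> [k = 0] (mod int d) \<Longrightarrow> shift d j k m = m"
proof -
  assume m: "m \<in> words n d" and k: "[k = 0] (mod int d)"
  have "shift d j k m = shift d j 0 m" using shift_cong[OF k] .
  also have "\<dots> = m"
    using m by (cases "j < length m") (auto simp: shift_def words_iff list_update_beyond)
  finally show ?thesis .
qed

lemma shift_sum_on:
  assumes "finite A" "j < length m" "0 < d"
  shows "[int (\<Sum>i\<in>A. shift d j k m ! i) = int (\<Sum>i\<in>A. m ! i) + (if j \<in> A then k else 0)] (mod int d)"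
proof (cases "j \<in> A")
  case True
  have rest: "(\<Sum>i\<in>A - {j}. shift d j k m ! i) = (\<Sum>i\<in>A - {j}. m ! i)"
    by (rule sum.cong) (auto simp: nth_shift)
  have "int (\<Sum>i\<in>A. shift d j k m ! i) = (int (m ! j) + k) mod int d + int (\<Sum>i\<in>A - {j}. m ! i)"
    using assms True rest by (simp add: sum.remove nth_shift)
  also have "[\<dots> = (int (m ! j) + k) + int (\<Sum>i\<in>A - {j}. m ! i)] (mod int d)"
    by (intro cong_add) (simp_all add: cong_def)
  also have "(int (m ! j) + k) + int (\<Sum>i\<in>A - {j}. m ! i) = int (\<Sum>i\<in>A. m ! i) + k"
    using assms True by (simp add: sum.remove)
  finally show ?thesis using True by simp
next
  case False
  then have "(\<Sum>i\<in>A. shift d j k m ! i) = (\<Sum>i\<in>A. m ! i)"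
    by (intro sum.cong) (auto simp: nth_shift)
  then show ?thesis using False by simp
qed

lemma shift_sum_list:
  assumes "j < length m" "0 < d"
  shows "[int (sum_list (shift d j k m)) = int (sum_list m) + k] (mod int d)"
  using shift_sum_on[of "{0..<length m}" j m d k] assms by (simp add: sum_list_sum_nth)

definition transfer :: "nat \<Rightarrow> nat \<Rightarrow> nat \<Rightarrow> int \<Rightarrow> nat list \<Rightarrow> nat list" where
  "transfer d i j a m = shift d i a (shift d j (- a) m)"

lemma transfer_words: "0 < d \<Longrightarrow> m \<in> words n d \<Longrightarrow> transfer d i j a m \<in> words n d"
  by (simp add: transfer_def shift_words)

lemma transfer_add:
  "0 < d \<Longrightarrow> transfer d i j a (transfer d i j b m) = transfer d i j (a + b) m"
  by (simp add: transfer_def shift_shift shift_comm[of d j] add.commute)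

lemma transfer_cong: "[a = b] (mod int d) \<Longrightarrow> transfer d i j a m = transfer d i j b m"
  unfolding transfer_def using shift_cong cong_minus_minus_iff by metis

lemma transfer_trivial:
  assumes "0 < d" "m \<in> words n d" "[a = 0] (mod int d)" shows "transfer d i j a m = m"
proof -
  have "transfer d i j a m = shift d i 0 (shift d j 0 m)"
    using transfer_cong[OF assms(3)] by (simp add: transfer_def)
  also have "\<dots> = m" using assms(2) by (simp add: shift_trivial)
  finally show ?thesis .
qed

lemma transfer_self: "0 < d \<Longrightarrow> m \<in> words n d \<Longrightarrow> transfer d i i a m = m"
  by (simp add: transfer_def shift_shift shift_trivial)

lemma transfer_trans:
  assumes "0 < d" "m \<in> words n d"
  shows "transfer d i k a (transfer d k j a m) = transfer d i j a m"
proof -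
  have "transfer d i k a (transfer d k j a m) = shift d i a (shift d k (- a + a) (shift d j (- a) m))"
    using assms(1) by (simp add: transfer_def shift_shift)
  also have "\<dots> = transfer d i j a m"
    using shift_trivial[OF shift_words[OF assms], of 0 k] by (simp add: transfer_def)
  finally show ?thesis .
qed

lemma transfer_shift_comm:
  "0 < d \<Longrightarrow> transfer d i j a (shift d k b m) = shift d k b (transfer d i j a m)"
  by (simp add: transfer_def shift_comm[of d k])

lemma transfer_sum_on:
  assumes "finite A" "i < length m" "j < length m" "i \<in> A" "j \<notin> A" "0 < d"
  shows "[int (\<Sum>k\<in>A. transfer d i j a m ! k) = int (\<Sum>k\<in>A. m ! k) + a] (mod int d)"
proof -
  have "[int (\<Sum>k\<in>A. transfer d i j a m ! k) = int (\<Sum>k\<in>A. shift d j (- a) m ! k) + a] (mod int d)"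
    using shift_sum_on[of A i "shift d j (- a) m" d a] assms by (simp add: transfer_def)
  moreover have "[int (\<Sum>k\<in>A. shift d j (- a) m ! k) = int (\<Sum>k\<in>A. m ! k)] (mod int d)"
    using shift_sum_on[of A j m d "- a"] assms by simp
  ultimately show ?thesis by (metis cong_add cong_refl cong_trans)
qed

lemma transfer_sum_list:
  assumes "i < length m" "j < length m" "0 < d"
  shows "[int (sum_list (transfer d i j a m)) = int (sum_list m)] (mod int d)"
proof -
  have "[int (sum_list (transfer d i j a m)) = int (sum_list (shift d j (- a) m)) + a] (mod int d)"
    using shift_sum_list[of i "shift d j (- a) m" d a] assms by (simp add: transfer_def)
  moreover have "[int (sum_list (shift d j (- a) m)) + a = int (sum_list m) + - a + a] (mod int d)"
    using shift_sum_list[of j m d "- a"] assms by (intro cong_add) simp_all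
  ultimately show ?thesis by (simp add: cong_trans)
qed

lemma transfer_bij:
  assumes "0 < d" shows "bij_betw (transfer d i j a) (words n d) (words n d)"
proof (rule bij_betw_byWitness[where f' = "transfer d i j (- a)"])
  show "\<forall>m\<in>words n d. transfer d i j (- a) (transfer d i j a m) = m"
    "\<forall>m\<in>words n d. transfer d i j a (transfer d i j (- a) m) = m"
    using assms by (simp_all add: transfer_add transfer_trivial)
qed (use assms transfer_words in auto)

lemma path:
  assumes s: "s \<in> words n c" and s': "s' \<in> words n c" and "P s"
    and step: "\<And>t k. t \<in> words n c \<Longrightarrow> k < n \<Longrightarrow> t ! k = s ! k \<Longrightarrow> P t \<Longrightarrow> P (t[k := s' ! k])"
  shows "P s'"
proof -
  have len: "length s = n" "length s' = n" using s s' by (simp_all add: words_iff)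
  have "P (take k s' @ drop k s)" if "k \<le> n" for k
    using that
  proof (induction k)
    case 0
    then show ?case using \<open>P s\<close> by simp
  next
    case (Suc k)
    let ?t = "take k s' @ drop k s"
    have t: "?t \<in> words n c" using s s' Suc.prems by (auto simp: words_iff nth_append)
    have "take (Suc k) s' @ drop (Suc k) s = ?t[k := s' ! k]"
      using len Suc.prems by (intro nth_equalityI) (auto simp: nth_append nth_list_update)
    moreover have "?t ! k = s ! k" using len Suc.prems by (simp add: nth_append)
    ultimately show ?case using step[OF t] Suc by simp
  qed
  from this[of n] show ?thesis using len by simp
qed

lemma card_residue_class:
  assumes "0 < d"
  shows "card {m \<in> words (Suc k) d. [sum_list m = r] (mod d)} = d ^ k"
proof -
  define head where "head w = nat ((int r - int (sum_list w)) mod int d)" for w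
  have head_iff: "[a + sum_list w = r] (mod d) \<longleftrightarrow> a = head w" if "a < d" for a w
  proof -
    have "[a + sum_list w = r] (mod d) \<longleftrightarrow> [int a = int r - int (sum_list w)] (mod int d)"
      by (simp add: cong_int_iff[symmetric] cong_iff_dvd_diff algebra_simps)
    also have "\<dots> \<longleftrightarrow> a = head w"
      using that assms by (auto simp: head_def cong_def)
    finally show ?thesis .
  qed
  have "{m \<in> words (Suc k) d. [sum_list m = r] (mod d)} = (\<lambda>w. head w # w) ` words k d"
  proof (intro set_eqI iffI)
    fix m assume "m \<in> {m \<in> words (Suc k) d. [sum_list m = r] (mod d)}"
    then obtain a w where "m = a # w" "a < d" "w \<in> words k d" "[a + sum_list w = r] (mod d)"
      by (cases m) (auto simp: words_def)
    then show "m \<in> (\<lambda>w. head w # w) ` words k d" using head_iff by auto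
  next
    fix m assume "m \<in> (\<lambda>w. head w # w) ` words k d"
    then obtain w where "w \<in> words k d" "m = head w # w" by blast
    moreover have "head w < d" using assms by (simp add: head_def nat_less_iff)
    ultimately show "m \<in> {m \<in> words (Suc k) d. [sum_list m = r] (mod d)}"
      using head_iff by (auto simp: words_def)
  qed
  moreover have "inj_on (\<lambda>w. head w # w) (words k d)" by (auto simp: inj_on_def)
  ultimately show ?thesis by (simp add: card_image card_words)
qed

lemma unique_completion:
  assumes m: "m \<in> words n d" and m': "m' \<in> words n d" and j: "j < n"
    and agree: "\<forall>i<n. i \<noteq> j \<longrightarrow> m ! i = m' ! i" and sum: "[sum_list m = sum_list m'] (mod d)"
  shows "m = m'"
proof -
  have len: "length m = n" "length m' = n" using m m' by (simp_all add: words_iff)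
  have m'_upd: "m' = m[j := m' ! j]"
    using len agree j by (intro nth_equalityI) (auto simp: nth_list_update)
  have "sum_list m' + m ! j = sum_list m + m' ! j"
    using sum_list_update[of j m "m' ! j"] m'_upd len j elem_le_sum_list[of j m] by simp
  then have "[m ! j + sum_list m' = m' ! j + sum_list m'] (mod d)"
    using sum by (metis add.commute cong_add_rcancel_nat)
  then have "[m ! j = m' ! j] (mod d)" by (simp add: cong_add_rcancel_nat)
  moreover have "m ! j < d" "m' ! j < d" using m m' j by (simp_all add: words_iff)
  ultimately have "m ! j = m' ! j" by (simp add: cong_def)
  then show ?thesis using m'_upd by (metis list_update_id)
qed

(* A conditional distribution is non-signaling if every change of a single input can be
   compensated by shifting the output of the same party: marginals over groups
   not containing that party are then preserved, since the shift permutes the summands. *)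
lemma non_signaling_by_shifts:
  assumes d: "0 < d"
    and compensate: "\<And>s j x. s \<in> words n c \<Longrightarrow> j < n \<Longrightarrow> x < c \<Longrightarrow>
      \<exists>K. \<forall>m\<in>words n d. g (shift d j K m) (s[j := x]) = g m s"
  shows "non_signaling n c d g"
  unfolding non_signaling_def
proof (intro allI impI ballI)
  fix S s s' m
  assume s: "s \<in> words n c" and s': "s' \<in> words n c" and agree: "\<forall>j\<in>S. s ! j = s' ! j"
  define E where "E = {m' \<in> words n d. \<forall>j\<in>S. m' ! j = m ! j}"
  have marginal_E: "marginal n d g S m t = (\<Sum>m'\<in>E. g m' t)" for t
    by (simp add: marginal_def E_def)
  show "marginal n d g S m s = marginal n d g S m s'"
  proof (rule path[OF s s', where P = "\<lambda>t. marginal n d g S m s = marginal n d g S m t"])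
    fix t k
    assume t: "t \<in> words n c" and k: "k < n" and tk: "t ! k = s ! k"
      and IH: "marginal n d g S m s = marginal n d g S m t"
    show "marginal n d g S m s = marginal n d g S m (t[k := s' ! k])"
    proof (cases "k \<in> S")
      case True
      then have "t[k := s' ! k] = t" using tk agree by (metis list_update_id)
      then show ?thesis using IH by simp
    next
      case False
      have "s' ! k < c" using s' k by (simp add: words_iff)
      then obtain K where K: "\<forall>m\<in>words n d. g (shift d k K m) (t[k := s' ! k]) = g m t"
        using compensate[OF t k] by blast
      have shift_E: "shift d k L m' \<in> E" if "m' \<in> E" for L m'
        using that False d by (auto simp: E_def shift_words nth_shift)
      have inverse: "shift d k (- L) (shift d k L m') = m'" if "m' \<in> E" for L m'
        using that d shift_trivial[of m' n d 0 k] by (simp add: E_def shift_shift)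
      have "bij_betw (shift d k K) E E"
        by (rule bij_betw_byWitness[where f' = "shift d k (- K)"])
           (use shift_E inverse[of _ K] inverse[of _ "- K"] in auto)
      then have "(\<Sum>m'\<in>E. g m' (t[k := s' ! k])) = (\<Sum>m'\<in>E. g (shift d k K m') (t[k := s' ! k]))"
        by (rule sum.reindex_bij_betw[symmetric])
      also have "\<dots> = (\<Sum>m'\<in>E. g m' t)" using K by (intro sum.cong) (auto simp: E_def)
      finally show ?thesis using IH by (simp add: marginal_E)
    qed
  qed simp
qed

lemma extreme_point_funI:
  assumes "p \<in> K" and nonneg: "\<And>q m s. q \<in> K \<Longrightarrow> 0 \<le> q m s"
    and support: "\<And>q. q \<in> K \<Longrightarrow> (\<And>m s. p m s = 0 \<Longrightarrow> q m s = 0) \<Longrightarrow> q = p"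
  shows "extreme_point_fun p K"
  unfolding extreme_point_fun_def
proof (intro conjI ballI allI impI notI)
  fix q r and t :: real
  assume q: "q \<in> K" and r: "r \<in> K" and t: "0 < t \<and> t < 1 \<and> q \<noteq> r"
    and p: "p = (\<lambda>m s. (1 - t) * q m s + t * r m s)"
  have "q m s = 0 \<and> r m s = 0" if "p m s = 0" for m s
  proof -
    have "(1 - t) * q m s + t * r m s = 0" using that p by simp
    moreover have "0 \<le> (1 - t) * q m s" "0 \<le> t * r m s" using t nonneg[OF q] nonneg[OF r] by simp_all
    ultimately show ?thesis using t by (simp add: add_nonneg_eq_0_iff)
  qed
  then have "q = p" "r = p" using support[OF q] support[OF r] by blast+
  then show False using t by simp
qed fact

lemma not_extreme_point_fun_midpoint:
  assumes "q \<in> K" "r \<in> K" "q \<noteq> r" "p = (\<lambda>m s. (q m s + r m s) / 2)"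
  shows "\<not> extreme_point_fun p K"
proof -
  have "p = (\<lambda>m s. (1 - 1 / 2) * q m s + 1 / 2 * r m s)" using assms(4) by (simp add: field_simps)
  moreover have "0 < (1 / 2 :: real) \<and> (1 / 2 :: real) < 1 \<and> q \<noteq> r" using assms(3) by simp
  ultimately show ?thesis using assms(1,2) unfolding extreme_point_fun_def by blast
qed

definition restrict :: "nat set \<Rightarrow> nat list \<Rightarrow> nat list" where
  "restrict A s = map (\<lambda>k. if k \<in> A then s ! k else 0) [0..<length s]"

lemma length_restrict [simp]: "length (restrict A s) = length s"
  by (simp add: restrict_def)

lemma nth_restrict [simp]: "k < length s \<Longrightarrow> restrict A s ! k = (if k \<in> A then s ! k else 0)"
  by (simp add: restrict_def)

lemma restrict_words: "0 < c \<Longrightarrow> s \<in> words n c \<Longrightarrow> restrict A s \<in> words n c"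
  by (simp add: words_iff)

lemma restrict_restrict: "restrict A (restrict B s) = restrict (A \<inter> B) s"
  by (simp add: restrict_def)

lemma restrict_update: "k \<in> A \<Longrightarrow> restrict A (t[k := v]) = (restrict A t)[k := v]"
  by (cases "k < length t") (auto simp: list_update_beyond nth_list_update intro!: nth_equalityI)

lemma restrict_cong:
  "length s = length s' \<Longrightarrow> \<forall>k\<in>A. s ! k = s' ! k \<Longrightarrow> restrict A s = restrict A s'"
  by (simp add: restrict_def)

definition additive_across :: "nat \<Rightarrow> nat \<Rightarrow> nat \<Rightarrow> (nat list \<Rightarrow> nat) \<Rightarrow> nat set \<Rightarrow> bool" where
  "additive_across n c d f A \<longleftrightarrow> (\<forall>i\<in>A. \<forall>j\<in>{0..<n} - A. \<forall>s\<in>words n c. \<forall>x<c. \<forall>y<c.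
     [int (f (s[j := y, i := x])) - int (f (s[j := y])) = int (f (s[i := x])) - int (f s)] (mod int d))"

lemma increment_independent:
  assumes add: "additive_across n c d f A" and t: "t \<in> words n c" and t': "t' \<in> words n c"
    and agree: "\<forall>k\<in>A. t ! k = t' ! k" and i: "i \<in> A" and x: "x < c"
  shows "[int (f (t[i := x])) - int (f t) = int (f (t'[i := x])) - int (f t')] (mod int d)"
proof (rule path[OF t t', where P = "\<lambda>u. [int (f (t[i := x])) - int (f t) = int (f (u[i := x])) - int (f u)] (mod int d)"])
  fix u k
  assume u: "u \<in> words n c" and k: "k < n" and uk: "u ! k = t ! k"
    and IH: "[int (f (t[i := x])) - int (f t) = int (f (u[i := x])) - int (f u)] (mod int d)"
  show "[int (f (t[i := x])) - int (f t) = int (f (u[k := t' ! k, i := x])) - int (f (u[k := t' ! k]))] (mod int d)"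
  proof (cases "k \<in> A")
    case True
    then have "u[k := t' ! k] = u" using uk agree by (metis list_update_id)
    then show ?thesis using IH by simp
  next
    case False
    have "t' ! k < c" using t' k by (simp add: words_iff)
    then have "[int (f (u[k := t' ! k, i := x])) - int (f (u[k := t' ! k])) = int (f (u[i := x])) - int (f u)] (mod int d)"
      using add False k i u x by (simp add: additive_across_def)
    then show ?thesis using IH cong_sym cong_trans by blast
  qed
qed simp

lemma rectangle:
  assumes add: "additive_across n c d f A" and A: "A \<subseteq> {0..<n}" and s: "s \<in> words n c" and c: "0 < c"
  defines "B \<equiv> {0..<n} - A"
  shows "[int (f s) - int (f (restrict B s)) = int (f (restrict A s)) - int (f (restrict {} s))] (mod int d)"
proof (rule path[OF restrict_words[OF c s] s, where
    P = "\<lambda>t. [int (f t) - int (f (restrict B s)) = int (f (restrict A t)) - int (f (restrict {} s))] (mod int d)"])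
  show "[int (f (restrict B s)) - int (f (restrict B s)) =
      int (f (restrict A (restrict B s))) - int (f (restrict {} s))] (mod int d)"
    by (simp add: restrict_restrict B_def)
next
  fix t k
  assume t: "t \<in> words n c" and k: "k < n" and tk: "t ! k = restrict B s ! k"
    and IH: "[int (f t) - int (f (restrict B s)) = int (f (restrict A t)) - int (f (restrict {} s))] (mod int d)"
  have len: "length s = n" "length t = n" using s t by (simp_all add: words_iff)
  show "[int (f (t[k := s ! k])) - int (f (restrict B s)) =
      int (f (restrict A (t[k := s ! k]))) - int (f (restrict {} s))] (mod int d)"
  proof (cases "k \<in> A")
    case True
    have "s ! k < c" using s k by (simp add: words_iff)
    moreover have "\<forall>j\<in>A. t ! j = restrict A t ! j" using A len by auto
    ultimately have step: "[int (f (t[k := s ! k])) - int (f t) =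
        int (f ((restrict A t)[k := s ! k])) - int (f (restrict A t))] (mod int d)"
      using increment_independent[OF add t restrict_words[OF c t]] True by blast
    have "[(int (f (t[k := s ! k])) - int (f t)) + (int (f t) - int (f (restrict B s))) =
        (int (f ((restrict A t)[k := s ! k])) - int (f (restrict A t))) +
        (int (f (restrict A t)) - int (f (restrict {} s)))] (mod int d)"
      using step IH by (rule cong_add)
    then show ?thesis using True by (simp add: restrict_update)
  next
    case False
    then have "t ! k = s ! k" using tk k len by (simp add: B_def)
    then have "t[k := s ! k] = t" by (metis list_update_id)
    then show ?thesis using IH by simp
  qed
qed

lemma bipartite_linear_if_additive_across:
  assumes c: "0 < c" and d: "0 < d" and A: "A \<subseteq> {0..<n}" "A \<noteq> {}" "{0..<n} - A \<noteq> {}"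
    and add: "additive_across n c d f A"
  shows "bipartite_linear n c d f"
proof -
  define B where "B = {0..<n} - A"
  define fA where "fA s = nat (int (f (restrict A s)) mod int d)" for s
  define fB where "fB s = nat ((int (f (restrict B s)) - int (f (restrict {} s))) mod int d)" for s
  have restrict_eq: "restrict X s = restrict X s'"
    if "s \<in> words n c" "s' \<in> words n c" "\<forall>k\<in>X. s ! k = s' ! k" for X s s'
    using that by (intro restrict_cong) (auto simp: words_iff)
  have "depends_only_on n c A fA"
    unfolding depends_only_on_def
  proof (intro ballI impI)
    fix s s' assume "s \<in> words n c" "s' \<in> words n c" "\<forall>j\<in>A. s ! j = s' ! j"
    then show "fA s = fA s'" using restrict_eq[of s s' A] by (simp add: fA_def)
  qed
  moreover have "depends_only_on n c B fB"
    unfolding depends_only_on_def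
  proof (intro ballI impI)
    fix s s' assume "s \<in> words n c" "s' \<in> words n c" "\<forall>j\<in>B. s ! j = s' ! j"
    then show "fB s = fB s'" using restrict_eq[of s s' B] restrict_eq[of s s' "{}"] by (simp add: fB_def)
  qed
  moreover have "\<forall>s\<in>words n c. fA s < d \<and> fB s < d"
    using d by (simp add: fA_def fB_def nat_less_iff)
  moreover have "f s mod d = (fA s + fB s) mod d" if s: "s \<in> words n c" for s
  proof -
    have "[int (f s) = int (f (restrict A s)) + (int (f (restrict B s)) - int (f (restrict {} s)))] (mod int d)"
      using rectangle[OF add A(1) s c] by (simp add: B_def cong_iff_dvd_diff algebra_simps)
    moreover have "[int (f (restrict A s)) + (int (f (restrict B s)) - int (f (restrict {} s))) =
        int (fA s) + int (fB s)] (mod int d)"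
      using d by (intro cong_add) (simp_all add: fA_def fB_def cong_def)
    ultimately show ?thesis by (simp add: nat_mod_eq_iff_cong cong_trans)
  qed
  moreover have "A \<inter> B = {}" "A \<union> B = {0..<n}" "B \<noteq> {}" using A by (auto simp: B_def)
  ultimately show ?thesis using A(2) unfolding bipartite_linear_def by blast
qed

locale setting =
  fixes n c d :: nat and f :: "nat list \<Rightarrow> nat"
  assumes n_ge_2: "2 \<le> n" and c_ge_2: "2 \<le> c" and prime_d: "prime d"
begin

abbreviation p :: "nat list \<Rightarrow> nat list \<Rightarrow> real" where
  "p \<equiv> pf n c d f"

lemma d_ge_2: "2 \<le> d"
  using prime_d prime_ge_2_nat by blast

lemma d_pos: "0 < d"
  using d_ge_2 by simp

definition support :: "nat list \<Rightarrow> nat list set" where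
  "support s = {m \<in> words n d. [sum_list m = f s] (mod d)}"

lemma pf_eq: "p m s = (if s \<in> words n c \<and> m \<in> support s then 1 / real d ^ (n - 1) else 0)"
  by (auto simp: pf_def support_def cong_def)

lemma card_support: "card (support s) = d ^ (n - 1)"
proof -
  have "Suc (n - 1) = n" using n_ge_2 by simp
  then show ?thesis using card_residue_class[OF d_pos, of "n - 1" "f s"] by (simp add: support_def)
qed

lemma sum_indicator_support:
  "(\<Sum>m\<in>words n d. if m \<in> support s then a else 0) = real d ^ (n - 1) * a"
proof -
  have "support s \<subseteq> words n d" by (auto simp: support_def)
  then have "(\<Sum>m\<in>words n d. if m \<in> support s then a else 0) = (\<Sum>m\<in>support s. a)"
    by (simp add: sum.If_cases finite_words Int_absorb1)
  then show ?thesis by (simp add: card_support)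
qed

definition peak :: "nat list \<Rightarrow> nat list" where
  "peak s = (f s mod d) # replicate (n - 1) 0"

lemma peak_support: "peak s \<in> support s"
  using n_ge_2 d_pos by (auto simp: peak_def support_def words_def cong_def sum_list_replicate)

lemma shift_support_iff:
  assumes m: "m \<in> words n d" and j: "j < n"
  shows "shift d j (int (f s') - int (f s)) m \<in> support s' \<longleftrightarrow> m \<in> support s"
proof -
  define m' where "m' = shift d j (int (f s') - int (f s)) m"
  have shifted: "int d dvd int (sum_list m') - (int (sum_list m) + (int (f s') - int (f s)))"
    using shift_sum_list[of j m d] m j d_pos by (simp add: words_iff m'_def cong_iff_dvd_diff)
  have split: "int (sum_list m') - int (f s') =
      (int (sum_list m') - (int (sum_list m) + (int (f s') - int (f s)))) + (int (sum_list m) - int (f s))"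
    by simp
  have "[int (sum_list m') = int (f s')] (mod int d) \<longleftrightarrow> [int (sum_list m) = int (f s)] (mod int d)"
    unfolding cong_iff_dvd_diff split using shifted by (rule dvd_add_right_iff)
  then show ?thesis
    using m shift_words[OF d_pos m] by (simp add: support_def cong_int_iff m'_def)
qed

lemma pf_shift:
  assumes "m \<in> words n d" "j < n" "s \<in> words n c" "s' \<in> words n c"
  shows "p (shift d j (int (f s') - int (f s)) m) s' = p m s"
  using assms shift_support_iff[OF assms(1,2)] by (simp add: pf_eq)

lemma transfer_support_iff:
  assumes m: "m \<in> words n d" and "i < n" "j < n"
  shows "transfer d i j a m \<in> support s \<longleftrightarrow> m \<in> support s"
proof -
  have "[int (sum_list (transfer d i j a m)) = int (sum_list m)] (mod int d)"
    using transfer_sum_list assms d_pos by (simp add: words_iff)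
  then have "[int (sum_list (transfer d i j a m)) = int (f s)] (mod int d) \<longleftrightarrow>
      [int (sum_list m) = int (f s)] (mod int d)"
    by (meson cong_sym cong_trans)
  then show ?thesis
    using m transfer_words[OF d_pos m] by (simp add: support_def cong_int_iff)
qed

lemma pf_transfer:
  assumes "m \<in> words n d" "i < n" "j < n"
  shows "p (transfer d i j a m) s = p m s"
  by (simp add: pf_eq transfer_support_iff[OF assms])

lemma pf_NS: "p \<in> NS n c d"
proof -
  have "cond_dist n c d p"
    unfolding cond_dist_def
  proof (intro conjI allI impI ballI)
    fix s assume "s \<in> words n c"
    then have "(\<Sum>m\<in>words n d. p m s) = (\<Sum>m\<in>words n d. if m \<in> support s then 1 / real d ^ (n - 1) else 0)"
      by (simp add: pf_eq)
    then show "(\<Sum>m\<in>words n d. p m s) = 1"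
      using d_pos by (simp add: sum_indicator_support)
  qed (auto simp: pf_def)
  moreover have "non_signaling n c d p"
  proof (rule non_signaling_by_shifts[OF d_pos])
    fix s j x assume "s \<in> words n c" "j < n" "x < c"
    then show "\<exists>K. \<forall>m\<in>words n d. p (shift d j K m) (s[j := x]) = p m s"
      using pf_shift update_words by blast
  qed
  ultimately show ?thesis by (simp add: NS_def)
qed

end

locale bipartite_split = setting +
  fixes A B :: "nat set" and fA fB :: "nat list \<Rightarrow> nat"
  assumes A_ne: "A \<noteq> {}" and B_ne: "B \<noteq> {}" and disjoint: "A \<inter> B = {}" and cover: "A \<union> B = {0..<n}"
    and fA_dep: "depends_only_on n c A fA" and fB_dep: "depends_only_on n c B fB"
    and f_split: "\<forall>s\<in>words n c. f s mod d = (fA s + fB s) mod d"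
begin

lemma finite_A: "finite A"
  using cover by (metis finite_Un finite_atLeastLessThan)

definition in_class :: "int \<Rightarrow> nat list \<Rightarrow> nat list \<Rightarrow> bool" where
  "in_class a m s \<longleftrightarrow> [int (\<Sum>k\<in>A. m ! k) = int (fA s) + a] (mod int d)"

definition tilt :: "real \<Rightarrow> nat list \<Rightarrow> nat list \<Rightarrow> real" where
  "tilt e m s = p m s * (1 + e * (of_bool (in_class 0 m s) - of_bool (in_class 1 m s)))"

(* Changing an input in A changes fA by the same amount as f (mod d), since fB is unaffected. *)
lemma fA_increment:
  assumes s: "s \<in> words n c" and x: "x < c" and j: "j \<in> A"
  shows "[int (fA (s[j := x])) - int (fA s) = int (f (s[j := x])) - int (f s)] (mod int d)"
proof -
  define s' where "s' = s[j := x]"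
  have s': "s' \<in> words n c" using update_words[OF s x] by (simp add: s'_def)
  have "j \<notin> B" using j disjoint by blast
  then have "\<forall>k\<in>B. s ! k = s' ! k" unfolding s'_def by (metis nth_list_update_neq)
  then have fB_eq: "fB s' = fB s" using fB_dep s s' unfolding depends_only_on_def by metis
  have "int d dvd int (f t) - (int (fA t) + int (fB t))" if "t \<in> words n c" for t
    using f_split that by (simp add: nat_mod_eq_iff_cong cong_iff_dvd_diff)
  then have "int d dvd (int (f s) - (int (fA s) + int (fB s))) - (int (f s') - (int (fA s') + int (fB s')))"
    using s s' by (simp add: dvd_diff)
  then show ?thesis using fB_eq by (simp add: s'_def[symmetric] cong_iff_dvd_diff algebra_simps)
qed

(* The compensating shift of a party in A changes its class sum by the change of fA;
   a shift in B changes neither.  So class membership is a non-signaling observable. *)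
lemma in_class_shift:
  assumes m: "m \<in> words n d" and j: "j < n" and s: "s \<in> words n c" and x: "x < c"
  shows "in_class a (shift d j (int (f (s[j := x])) - int (f s)) m) (s[j := x]) \<longleftrightarrow> in_class a m s"
proof -
  define s' where "s' = s[j := x]"
  define K where "K = int (f s') - int (f s)"
  define \<Sigma> where "\<Sigma> m' = int (\<Sum>k\<in>A. m' ! k)" for m'
  have sum_A: "[\<Sigma> (shift d j K m) = \<Sigma> m + (if j \<in> A then K else 0)] (mod int d)"
    using shift_sum_on[OF finite_A, of j m d K] m j d_pos by (simp add: words_iff \<Sigma>_def)
  have "[\<Sigma> (shift d j K m) - int (fA s') = \<Sigma> m - int (fA s)] (mod int d)"
  proof (cases "j \<in> A")
    case True
    have "int d dvd \<Sigma> (shift d j K m) - (\<Sigma> m + K)"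
      using sum_A True by (simp add: cong_iff_dvd_diff)
    moreover have "int d dvd (int (fA s') - int (fA s)) - K"
      using fA_increment[OF s x True] by (simp add: cong_iff_dvd_diff s'_def K_def)
    ultimately have "int d dvd (\<Sigma> (shift d j K m) - (\<Sigma> m + K)) - ((int (fA s') - int (fA s)) - K)"
      by (rule dvd_diff)
    then show ?thesis by (simp add: cong_iff_dvd_diff algebra_simps)
  next
    case False
    then have "\<forall>k\<in>A. s ! k = s' ! k" unfolding s'_def by (metis nth_list_update_neq)
    then have "fA s' = fA s" using fA_dep s update_words[OF s x] unfolding depends_only_on_def s'_def by metis
    then show ?thesis using sum_A False by (simp add: cong_diff)
  qed
  then show ?thesis unfolding in_class_def \<Sigma>_def s'_def[symmetric] K_def[symmetric] by (rule cong_offset_iff)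
qed

lemma in_class_transfer:
  assumes m: "m \<in> words n d" and i: "i \<in> A" and j: "j \<in> B"
  shows "in_class (a + b) (transfer d i j b m) s \<longleftrightarrow> in_class a m s"
proof -
  have "i < length m" "j < length m" "j \<notin> A" using m i j cover disjoint by (auto simp: words_iff)
  then have "[int (\<Sum>k\<in>A. transfer d i j b m ! k) = int (\<Sum>k\<in>A. m ! k) + b] (mod int d)"
    using transfer_sum_on[OF finite_A _ _ i] d_pos by blast
  then have "[int (\<Sum>k\<in>A. transfer d i j b m ! k) - (int (fA s) + b) = int (\<Sum>k\<in>A. m ! k) - int (fA s)] (mod int d)"
    by (simp add: cong_iff_dvd_diff algebra_simps)
  then have "[int (\<Sum>k\<in>A. transfer d i j b m ! k) = (int (fA s) + b) + a] (mod int d) \<longleftrightarrow>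
      [int (\<Sum>k\<in>A. m ! k) = int (fA s) + a] (mod int d)"
    by (rule cong_offset_iff)
  then show ?thesis by (simp add: in_class_def ac_simps)
qed

(* Moving one unit of output from B to A maps the class a onto the class a + 1 without
   changing p; hence the two classes carry the same mass. *)
lemma class_mass_equal:
  "(\<Sum>m\<in>words n d. p m s * of_bool (in_class 1 m s)) = (\<Sum>m\<in>words n d. p m s * of_bool (in_class 0 m s))"
proof -
  obtain i j where i: "i \<in> A" and j: "j \<in> B" using A_ne B_ne by blast
  then have "i < n" "j < n" using cover by auto
  have "(\<Sum>m\<in>words n d. p m s * of_bool (in_class 1 m s)) =
      (\<Sum>m\<in>words n d. p (transfer d i j 1 m) s * of_bool (in_class 1 (transfer d i j 1 m) s))"
    by (rule sum.reindex_bij_betw[OF transfer_bij[OF d_pos], symmetric])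
  also have "\<dots> = (\<Sum>m\<in>words n d. p m s * of_bool (in_class 0 m s))"
    using in_class_transfer[OF _ i j, of _ 0 1] pf_transfer[OF _ \<open>i < n\<close> \<open>j < n\<close>]
    by (intro sum.cong) simp_all
  finally show ?thesis .
qed

lemma tilt_NS:
  assumes e: "\<bar>e\<bar> \<le> 1"
  shows "tilt e \<in> NS n c d"
proof -
  have "cond_dist n c d (tilt e)"
    unfolding cond_dist_def
  proof (intro conjI allI impI ballI)
    fix m s
    have "0 \<le> 1 + e * (of_bool (in_class 0 m s) - of_bool (in_class 1 m s))"
      using e by (auto simp: abs_le_iff)
    then show "0 \<le> tilt e m s" by (simp add: tilt_def pf_def)
  next
    fix s assume "s \<in> words n c"
    then have "(\<Sum>m\<in>words n d. p m s) = 1" using pf_NS by (simp add: NS_def cond_dist_def)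
    moreover have "(\<Sum>m\<in>words n d. tilt e m s) = (\<Sum>m\<in>words n d. p m s) +
        e * ((\<Sum>m\<in>words n d. p m s * of_bool (in_class 0 m s)) - (\<Sum>m\<in>words n d. p m s * of_bool (in_class 1 m s)))"
      by (simp add: tilt_def algebra_simps sum.distrib sum_distrib_left sum_subtractf)
    ultimately show "(\<Sum>m\<in>words n d. tilt e m s) = 1" using class_mass_equal[of s] by simp
  qed (auto simp: tilt_def pf_def)
  moreover have "non_signaling n c d (tilt e)"
  proof (rule non_signaling_by_shifts[OF d_pos])
    fix s j x assume s: "s \<in> words n c" and j: "j < n" and x: "x < c"
    then have "\<forall>m\<in>words n d. tilt e (shift d j (int (f (s[j := x])) - int (f s)) m) (s[j := x]) = tilt e m s"
      using pf_shift in_class_shift update_words by (simp add: tilt_def)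
    then show "\<exists>K. \<forall>m\<in>words n d. tilt e (shift d j K m) (s[j := x]) = tilt e m s" by blast
  qed
  ultimately show ?thesis by (simp add: NS_def)
qed

(* The two tilts differ on a support word in class 0, which is not in class 1 as d > 1. *)
lemma tilt_distinct: "tilt 1 \<noteq> tilt (-1)"
proof
  assume tilt_eq: "tilt 1 = tilt (-1)"
  obtain i j where i: "i \<in> A" and j: "j \<in> B" using A_ne B_ne by blast
  then have "i < n" "j < n" using cover by auto
  define s where "s = replicate n (0::nat)"
  define \<sigma> where "\<sigma> = int (\<Sum>k\<in>A. peak s ! k)"
  define m where "m = transfer d i j (int (fA s) - \<sigma>) (peak s)"
  have s: "s \<in> words n c" using c_ge_2 by (simp add: s_def words_def)
  have peak: "peak s \<in> words n d" using peak_support by (simp add: support_def)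
  have "in_class (\<sigma> - int (fA s)) (peak s) s" by (simp add: in_class_def \<sigma>_def)
  then have class0: "in_class 0 m s"
    using in_class_transfer[OF peak i j, of "\<sigma> - int (fA s)" "int (fA s) - \<sigma>" s] by (simp add: m_def)
  have class1: "\<not> in_class 1 m s"
  proof
    assume "in_class 1 m s"
    with class0 have "[int (fA s) + 0 = int (fA s) + 1] (mod int d)"
      unfolding in_class_def by (meson cong_sym cong_trans)
    then have "int d dvd 1" by (simp add: cong_iff_dvd_diff)
    then show False using d_ge_2 by simp
  qed
  have "p m s = p (peak s) s" using pf_transfer[OF peak \<open>i < n\<close> \<open>j < n\<close>] by (simp add: m_def)
  then have "0 < p m s" using s peak_support d_pos by (simp add: pf_eq)
  moreover have "tilt 1 m s = tilt (-1) m s" using tilt_eq by simp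
  ultimately show False using class0 class1 by (simp add: tilt_def)
qed

lemma pf_midpoint: "p = (\<lambda>m s. (tilt 1 m s + tilt (-1) m s) / 2)"
  by (simp add: tilt_def algebra_simps)

end

context setting
begin

lemma not_extreme_if_bipartite_linear:
  assumes "bipartite_linear n c d f"
  shows "\<not> extreme_point_fun p (NS n c d)"
proof -
  obtain A B fA fB where "A \<noteq> {}" "B \<noteq> {}" "A \<inter> B = {}" "A \<union> B = {0..<n}"
    "depends_only_on n c A fA" "depends_only_on n c B fB" "\<forall>s\<in>words n c. f s mod d = (fA s + fB s) mod d"
    using assms unfolding bipartite_linear_def by blast
  then interpret bipartite_split n c d f A B fA fB by unfold_locales
  show ?thesis
    using not_extreme_point_fun_midpoint[OF tilt_NS tilt_NS tilt_distinct pf_midpoint] by simp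
qed

end

locale dominated = setting +
  fixes q :: "nat list \<Rightarrow> nat list \<Rightarrow> real"
  assumes q_NS: "q \<in> NS n c d" and q_support: "\<And>m s. p m s = 0 \<Longrightarrow> q m s = 0"
begin

lemma q_vanishes: "s \<in> words n c \<Longrightarrow> m \<notin> support s \<Longrightarrow> q m s = 0"
  by (rule q_support) (simp add: pf_eq)

lemma marginal_off_party:
  assumes j: "j < n" and t: "t \<in> words n c" and m: "m \<in> words n d" and m': "m' \<in> support t"
    and agree: "\<forall>i<n. i \<noteq> j \<longrightarrow> m' ! i = m ! i"
  shows "marginal n d q ({0..<n} - {j}) m t = q m' t"
proof -
  define E where "E = {m'' \<in> words n d. \<forall>i\<in>{0..<n} - {j}. m'' ! i = m ! i}"
  have m'E: "m' \<in> E" using m' agree by (auto simp: E_def support_def)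
  have "q m'' t = 0" if "m'' \<in> E - {m'}" for m''
  proof (rule q_vanishes[OF t])
    show "m'' \<notin> support t"
    proof
      assume "m'' \<in> support t"
      then have "[sum_list m'' = sum_list m'] (mod d)"
        using m' unfolding support_def by (blast intro: cong_trans cong_sym)
      moreover have "\<forall>i<n. i \<noteq> j \<longrightarrow> m'' ! i = m' ! i" using that agree by (auto simp: E_def)
      moreover have "m'' \<in> words n d" "m' \<in> words n d" using that m' by (simp_all add: E_def support_def)
      ultimately have "m'' = m'" using j by (blast intro: unique_completion)
      then show False using that by simp
    qed
  qed
  moreover have "finite E" using finite_words by (simp add: E_def)
  ultimately have "(\<Sum>m''\<in>E. q m'' t) = q m' t"
    using sum.remove[of E m' "\<lambda>m''. q m'' t"] m'E by simp
  then show ?thesis by (simp add: marginal_def E_def)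
qed

lemma q_shift:
  assumes s: "s \<in> words n c" and j: "j < n" and x: "x < c" and m: "m \<in> support s"
  shows "q (shift d j (int (f (s[j := x])) - int (f s)) m) (s[j := x]) = q m s"
proof -
  define s' where "s' = s[j := x]"
  define m' where "m' = shift d j (int (f s') - int (f s)) m"
  have s': "s' \<in> words n c" using update_words[OF s x] by (simp add: s'_def)
  have mw: "m \<in> words n d" using m by (simp add: support_def)
  have m': "m' \<in> support s'" using shift_support_iff[OF mw j] m by (simp add: m'_def)
  have "non_signaling n c d q" using q_NS by (simp add: NS_def)
  moreover have "\<forall>i\<in>{0..<n} - {j}. s ! i = s' ! i" by (simp add: s'_def)
  ultimately have "marginal n d q ({0..<n} - {j}) m s = marginal n d q ({0..<n} - {j}) m s'"
    using s s' mw unfolding non_signaling_def by (meson Diff_subset)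
  moreover have "marginal n d q ({0..<n} - {j}) m s = q m s"
    using marginal_off_party[OF j s mw m] by simp
  moreover have "marginal n d q ({0..<n} - {j}) m s' = q m' s'"
    using marginal_off_party[OF j s' mw m'] by (simp add: m'_def nth_shift)
  ultimately show ?thesis by (simp add: m'_def s'_def)
qed

lemma q_shift2:
  assumes s: "s \<in> words n c" and i: "i < n" and j: "j < n" and x: "x < c" and y: "y < c"
    and m: "m \<in> support s"
  shows "q (shift d j (int (f (s[i := x, j := y])) - int (f (s[i := x])))
            (shift d i (int (f (s[i := x])) - int (f s)) m)) (s[i := x, j := y]) = q m s"
proof -
  have mw: "m \<in> words n d" using m by (simp add: support_def)
  have "shift d i (int (f (s[i := x])) - int (f s)) m \<in> support (s[i := x])"
    using shift_support_iff[OF mw i] m by simp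
  then show ?thesis using q_shift[OF update_words[OF s x] j y] q_shift[OF s i x m] by simp
qed

definition transfer_inv :: "nat list \<Rightarrow> nat \<Rightarrow> nat \<Rightarrow> int \<Rightarrow> bool" where
  "transfer_inv s i j a \<longleftrightarrow> (\<forall>m\<in>words n d. q (transfer d i j a m) s = q m s)"

lemma transfer_inv_cong: "[a = b] (mod int d) \<Longrightarrow> transfer_inv s i j a \<longleftrightarrow> transfer_inv s i j b"
  by (simp add: transfer_inv_def transfer_cong)

lemma transfer_inv_add:
  assumes "transfer_inv s i j a" "transfer_inv s i j b"
  shows "transfer_inv s i j (a + b)"
  using assms d_pos by (simp add: transfer_inv_def transfer_add[symmetric] transfer_words)

lemma transfer_inv_uminus:
  assumes "transfer_inv s i j a"
  shows "transfer_inv s i j (- a)"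
  unfolding transfer_inv_def
proof
  fix m assume m: "m \<in> words n d"
  have "q (transfer d i j (- a) m) s = q (transfer d i j a (transfer d i j (- a) m)) s"
    using assms transfer_words[OF d_pos m] by (simp add: transfer_inv_def)
  also have "\<dots> = q m s" using d_pos m by (simp add: transfer_add transfer_trivial)
  finally show "q (transfer d i j (- a) m) s = q m s" .
qed

lemma transfer_inv_mult:
  assumes a: "transfer_inv s i j a"
  shows "transfer_inv s i j (k * a)"
proof -
  have nat_mult: "transfer_inv s i j (int l * a)" for l
  proof (induction l)
    case 0
    then show ?case using d_pos by (simp add: transfer_inv_def transfer_trivial)
  next
    case (Suc l)
    then show ?case using transfer_inv_add[OF Suc a] by (simp add: algebra_simps)
  qed
  show ?thesis
  proof (cases "0 \<le> k")
    case True
    then show ?thesis using nat_mult[of "nat k"] by simp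
  next
    case False
    then show ?thesis using transfer_inv_uminus[OF nat_mult[of "nat (- k)"]] by simp
  qed
qed

lemma transfer_inv_self: "transfer_inv s i i a"
  using d_pos by (simp add: transfer_inv_def transfer_self)

lemma transfer_inv_trans:
  assumes "transfer_inv s i k a" "transfer_inv s k j a"
  shows "transfer_inv s i j a"
  unfolding transfer_inv_def
proof
  fix m assume m: "m \<in> words n d"
  have "q (transfer d i j a m) s = q (transfer d i k a (transfer d k j a m)) s"
    using transfer_trans[OF d_pos m] by simp
  also have "\<dots> = q m s"
    using assms transfer_words[OF d_pos m] m by (simp add: transfer_inv_def)
  finally show "q (transfer d i j a m) s = q m s" .
qed

lemma transfer_inv_unit:
  assumes a: "transfer_inv s i j a" and not_dvd: "\<not> int d dvd a"
  shows "transfer_inv s i j 1"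
proof -
  have "prime (int d)" using prime_d by simp
  then have "coprime a (int d)" using prime_imp_coprime not_dvd coprime_commute by blast
  then obtain x where "[a * x = 1] (mod int d)" using cong_solve_coprime_int by blast
  moreover have "transfer_inv s i j (x * a)" using transfer_inv_mult[OF a] .
  ultimately show ?thesis using transfer_inv_cong by (metis mult.commute)
qed

(* The invariance survives a change of a single input: conjugate by the compensating shift. *)
lemma transfer_inv_update:
  assumes t: "t \<in> words n c" and k: "k < n" and x: "x < c" and i: "i < n" and j: "j < n"
    and inv: "transfer_inv t i j a"
  shows "transfer_inv (t[k := x]) i j a"
  unfolding transfer_inv_def
proof
  fix m assume m: "m \<in> words n d"
  define t' where "t' = t[k := x]"
  define K where "K = int (f t) - int (f t')"
  have t': "t' \<in> words n c" using update_words[OF t x] by (simp add: t'_def)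
  have restore: "t'[k := t ! k] = t" by (simp add: t'_def)
  have tk: "t ! k < c" using t k by (simp add: words_iff)
  show "q (transfer d i j a m) t' = q m t'"
  proof (cases "m \<in> support t'")
    case True
    then have T_support: "transfer d i j a m \<in> support t'" using transfer_support_iff[OF m i j] by simp
    have "q (transfer d i j a m) t' = q (shift d k K (transfer d i j a m)) t"
      using q_shift[OF t' k tk T_support] by (simp add: restore K_def)
    also have "\<dots> = q (transfer d i j a (shift d k K m)) t"
      using d_pos by (simp add: transfer_shift_comm)
    also have "\<dots> = q (shift d k K m) t"
      using inv shift_words[OF d_pos m] by (simp add: transfer_inv_def)
    also have "\<dots> = q m t'"
      using q_shift[OF t' k tk True] by (simp add: restore K_def)
    finally show ?thesis .
  next
    case False
    then have "transfer d i j a m \<notin> support t'" using transfer_support_iff[OF m i j] by simp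
    then show ?thesis using q_vanishes[OF t'] False by simp
  qed
qed

lemma transfer_inv_transport:
  assumes "transfer_inv s i j a" "s \<in> words n c" "s' \<in> words n c" "i < n" "j < n"
  shows "transfer_inv s' i j a"
proof (rule path[OF assms(2,3), where P = "\<lambda>t. transfer_inv t i j a"])
  fix t k assume "t \<in> words n c" "k < n" "transfer_inv t i j a"
  moreover have "s' ! k < c" using assms(3) \<open>k < n\<close> by (simp add: words_iff)
  ultimately show "transfer_inv (t[k := s' ! k]) i j a" using transfer_inv_update assms(4,5) by blast
qed fact

(* Going around the square s, s[i:=x], s[i:=x,j:=y], s[j:=y] along its two sides gives two
   shifts of the outputs which differ by a transfer of the mixed difference of f. *)
lemma transfer_inv_square:
  assumes s: "s \<in> words n c" and i: "i < n" and j: "j < n" and ij: "i \<noteq> j" and x: "x < c" and y: "y < c"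
  shows "transfer_inv s i j (int (f (s[i := x, j := y])) + int (f s) - int (f (s[i := x])) - int (f (s[j := y])))"
    (is "transfer_inv s i j ?a")
  unfolding transfer_inv_def
proof
  fix m assume m: "m \<in> words n d"
  define s12 where "s12 = s[i := x, j := y]"
  have swap: "s[j := y, i := x] = s12" using ij by (simp add: s12_def list_update_swap)
  define path_i where "path_i m' = shift d j (int (f s12) - int (f (s[i := x]))) (shift d i (int (f (s[i := x])) - int (f s)) m')" for m'
  define path_j where "path_j m' = shift d i (int (f s12) - int (f (s[j := y]))) (shift d j (int (f (s[j := y])) - int (f s)) m')" for m'
  have "path_i (transfer d i j ?a m) =
      shift d i (int (f (s[i := x])) - int (f s) + ?a) (shift d j (int (f s12) - int (f (s[i := x])) + - ?a) m)"
    using d_pos by (simp add: path_i_def transfer_def shift_shift shift_comm[of d j _ i])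
  also have "\<dots> = path_j m"
    using d_pos by (simp add: path_j_def s12_def shift_comm[of d j _ i] algebra_simps)
  finally have paths: "path_i (transfer d i j ?a m) = path_j m" .
  show "q (transfer d i j ?a m) s = q m s"
  proof (cases "m \<in> support s")
    case True
    then have "transfer d i j ?a m \<in> support s" using transfer_support_iff[OF m i j] by simp
    then have "q (transfer d i j ?a m) s = q (path_i (transfer d i j ?a m)) s12"
      using q_shift2[OF s i j x y] by (simp add: path_i_def s12_def)
    also have "\<dots> = q m s"
      using paths q_shift2[OF s j i y x True] by (simp add: path_j_def swap)
    finally show ?thesis .
  next
    case False
    then show ?thesis using transfer_support_iff[OF m i j] q_vanishes[OF s] by simp
  qed
qed

(* If every party is linked to party 0 by unit transfers, q is constant on the support:
   any support word is moved onto the peak word by emptying the parties n-1, ..., 1 into party 0. *)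
lemma q_constant_on_support:
  assumes linked: "\<forall>j<n. transfer_inv s 0 j 1" and s: "s \<in> words n c" and m: "m \<in> support s"
  shows "q m s = q (peak s) s"
proof -
  have "q m s = q (peak s) s" if "m \<in> support s" "\<forall>j. k < j \<and> j < n \<longrightarrow> m ! j = 0" for k m
    using that
  proof (induction k arbitrary: m)
    case 0
    then have mw: "m \<in> words n d" and len: "length m = n" by (simp_all add: support_def words_iff)
    have m_eq: "m = m ! 0 # replicate (n - 1) 0"
      using 0 len n_ge_2 by (intro nth_equalityI) (auto simp: nth_Cons split: nat.split)
    have "sum_list m = m ! 0" by (subst m_eq) (simp add: sum_list_replicate)
    then have "[m ! 0 = f s] (mod d)" using 0 by (simp add: support_def)
    then have "m ! 0 = f s mod d" using mw n_ge_2 by (simp add: words_iff cong_def)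
    then show ?case using m_eq by (simp add: peak_def)
  next
    case (Suc k)
    show ?case
    proof (cases "Suc k < n")
      case False
      then show ?thesis using Suc by auto
    next
      case True
      define m' where "m' = transfer d 0 (Suc k) (int (m ! Suc k)) m"
      have mw: "m \<in> words n d" using Suc.prems by (simp add: support_def)
      have "q m' s = q m s"
        using transfer_inv_mult[of s 0 "Suc k" 1 "int (m ! Suc k)"] linked True mw by (simp add: transfer_inv_def m'_def)
      moreover have "m' \<in> support s" using transfer_support_iff[OF mw _ True, of 0] n_ge_2 Suc.prems by (simp add: m'_def)
      moreover have "\<forall>j. k < j \<and> j < n \<longrightarrow> m' ! j = 0"
        using Suc.prems(2) mw True by (auto simp: m'_def transfer_def nth_shift words_iff)
      ultimately show ?thesis using Suc.IH by simp
    qed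
  qed
  from this[where k = n] show ?thesis using m by simp
qed

(* Normalisation then forces q = p. *)
lemma q_eq_pf_if_linked:
  assumes linked: "\<forall>j<n. \<forall>s\<in>words n c. transfer_inv s 0 j 1"
  shows "q = p"
proof (intro ext)
  fix m s
  show "q m s = p m s"
  proof (cases "s \<in> words n c \<and> m \<in> support s")
    case True
    then have s: "s \<in> words n c" and m: "m \<in> support s" by simp_all
    define h where "h = q (peak s) s"
    have "(\<Sum>m'\<in>words n d. q m' s) = (\<Sum>m'\<in>words n d. if m' \<in> support s then h else 0)"
      using q_constant_on_support[OF _ s] linked s q_vanishes[OF s] by (intro sum.cong) (simp_all add: h_def)
    moreover have "(\<Sum>m'\<in>words n d. q m' s) = 1" using q_NS s by (simp add: NS_def cond_dist_def)
    ultimately have "h = 1 / real d ^ (n - 1)" using d_pos by (simp add: sum_indicator_support field_simps)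
    then show ?thesis using q_constant_on_support[OF _ s m] linked s m by (simp add: pf_eq h_def)
  next
    case False
    moreover have "q m s = 0" if "s \<notin> words n c" using that q_NS by (simp add: NS_def cond_dist_def)
    ultimately show ?thesis using q_vanishes by (auto simp: pf_eq)
  qed
qed

lemma additive_across_linked:
  "additive_across n c d f {j. j < n \<and> (\<forall>s\<in>words n c. transfer_inv s 0 j 1)}" (is "additive_across n c d f ?A")
  unfolding additive_across_def
proof (intro ballI allI impI)
  fix i j s x y
  assume i: "i \<in> ?A" and j: "j \<in> {0..<n} - ?A" and s: "s \<in> words n c" and x: "x < c" and y: "y < c"
  define a where "a = int (f (s[i := x, j := y])) + int (f s) - int (f (s[i := x])) - int (f (s[j := y]))"
  have ij: "i \<noteq> j" "i < n" "j < n" using i j by auto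
  have "int d dvd a"
  proof (rule ccontr)
    assume "\<not> int d dvd a"
    then have "transfer_inv s i j 1" using transfer_inv_square[OF s ij(2,3,1) x y] transfer_inv_unit by (simp add: a_def)
    then have "transfer_inv s' 0 j 1" if "s' \<in> words n c" for s'
      using transfer_inv_transport[OF _ s that ij(2,3)] transfer_inv_trans i that by blast
    then show False using j ij by auto
  qed
  moreover have "s[j := y, i := x] = s[i := x, j := y]" using ij by (simp add: list_update_swap)
  ultimately show "[int (f (s[j := y, i := x])) - int (f (s[j := y])) = int (f (s[i := x])) - int (f s)] (mod int d)"
    by (simp add: cong_iff_dvd_diff a_def algebra_simps)
qed

lemma q_eq_pf:
  assumes "\<not> bipartite_linear n c d f"
  shows "q = p"
proof -
  define A where "A = {j. j < n \<and> (\<forall>s\<in>words n c. transfer_inv s 0 j 1)}"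
  have "0 \<in> A" using n_ge_2 transfer_inv_self by (simp add: A_def)
  moreover have "A \<subseteq> {0..<n}" by (auto simp: A_def)
  ultimately have "{0..<n} - A = {}"
    using bipartite_linear_if_additive_across[OF _ d_pos _ _ _ additive_across_linked] assms c_ge_2
    by (auto simp: A_def)
  then have "\<forall>j<n. \<forall>s\<in>words n c. transfer_inv s 0 j 1" by (auto simp: A_def)
  then show ?thesis by (rule q_eq_pf_if_linked)
qed

end

(* Proposition 2: p is a vertex of NS exactly when f is not bi-partite linear. *)
theorem proposition2:
  fixes n c d :: nat and f :: "nat list \<Rightarrow> nat"
  assumes "n \<ge> 2" and "c \<ge> 2" and "prime d"
    and "\<forall>s\<in>words n c. f s < d"
  shows "extreme_point_fun (pf n c d f) (NS n c d) \<longleftrightarrow> \<not> bipartite_linear n c d f"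
proof -
  interpret setting n c d f using assms(1-3) by unfold_locales
  show ?thesis
  proof
    assume "extreme_point_fun p (NS n c d)"
    then show "\<not> bipartite_linear n c d f" using not_extreme_if_bipartite_linear by blast
  next
    assume not_bl: "\<not> bipartite_linear n c d f"
    show "extreme_point_fun p (NS n c d)"
    proof (rule extreme_point_funI[OF pf_NS])
      show "0 \<le> q m s" if "q \<in> NS n c d" for q m s using that by (simp add: NS_def cond_dist_def)
    next
      fix q assume "q \<in> NS n c d" "\<And>m s. p m s = 0 \<Longrightarrow> q m s = 0"
      then interpret dominated n c d f q by unfold_locales
      show "q = p" using q_eq_pf[OF not_bl] .
    qed
  qed
qed

end
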